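(* Let $\Sigma$ be an alphabet, $\triangleleft\notin\Sigma$, and let $L\subseteq\Sigma^*$ be a context-free language all of whose strings have length at least $2$. Then there exists a pop-normalized MPDA $\mathcal A$ with $L(\mathcal A)=\mathrm{Next}(L)$.
   Context: $\mathrm{Next}(L)=\bigcup_{n\in\mathbb N}\{\langle\sigma_2,\sigma_1\rangle\cdots\langle\sigma_n,\sigma_{n-1}\rangle\langle\triangleleft,\sigma_n\rangle\mid\sigma_1,\dots,\sigma_n\in\Sigma,\ \sigma_1\cdots\sigma_n\in L\}$, a language over $(\Sigma\cup\{\triangleleft\})\times\Sigma$. A Moore push-down automaton (MPDA) is $\mathcal A=(Q,\Delta,\Gamma,\delta,\tau,I,F)$ with finite sets $Q$ (states), $\Delta$ (input symbols), $\Gamma$ (stack symbols), transitions $\delta\subseteq(Q\times\Gamma^{\le1}\times\Gamma^{\le1}\times Q)\setminus(Q\times\Gamma\times\Gamma\times Q)$ with $\Gamma^{\le1}=\{\varepsilon\}\cup\Gamma$, output function $\tau:Q\to\Delta$, and $I,F\subseteq Q$. Configurations $\langle q,\alpha\rangle\in Q\times\Gamma^*$; moves $\langle q,\gamma\alpha\rangle\vdash\langle q',\gamma'\alpha\rangle$ for $(q,\gamma,\gamma',q')\in\delta$ whenever $\gamma\alpha\ne\varepsilon$. Initial configurations: $q\in I$, $\alpha\in\Gamma$; final: $q\in F$, $\alpha=\varepsilon$. $L(\mathcal A)$ is the set of $\tau(q_0)\cdots\tau(q_n)$ for runs $\langle q_0,\alpha_0\rangle\vdash\cdots\vdash\langle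 q_n,\alpha_n\rangle$ from an initial to a final configuration. Pop-normalized: there is $\mathrm{return}:\Gamma\to Q$ with $q'=\mathrm{return}(\gamma)$ for every $(q,\gamma,\varepsilon,q')\in\delta$, $\gamma\in\Gamma$. *)

theory Defs
  imports Main
begin

text \<open>A grammar: productions (A, alpha) with nonterminals of type nat, right-hand sides
  over nonterminals (Inl) and terminals (Inr).\<close>

type_synonym 'a cfg_prods = "(nat \<times> (nat + 'a) list) set"

definition cfg_step :: "'a cfg_prods \<Rightarrow> (nat + 'a) list \<Rightarrow> (nat + 'a) list \<Rightarrow> bool" where
  "cfg_step P u v \<longleftrightarrow> (\<exists>l r A \<alpha>. (A, \<alpha>) \<in> P \<and> u = l @ [Inl A] @ r \<and> v = l @ \<alpha> @ r)"

definition cfg_lang :: "'a cfg_prods \<Rightarrow> nat \<Rightarrow> 'a list set" where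
  "cfg_lang P S = {w. (cfg_step P)\<^sup>*\<^sup>* [Inl S] (map Inr w)}"

definition context_free :: "'a set \<Rightarrow> 'a list set \<Rightarrow> bool" where
  "context_free \<Sigma> L \<longleftrightarrow>
     (\<exists>P S. finite P \<and> (\<forall>(A, \<alpha>) \<in> P. \<forall>x \<in> set \<alpha>. \<forall>a. x = Inr a \<longrightarrow> a \<in> \<Sigma>)
            \<and> L = cfg_lang P S)"

text \<open>For w = s1 ... sn, next_word tri w = (s2,s1) ... (sn,s(n-1)) (tri,sn).\<close>

definition next_word :: "'a \<Rightarrow> 'a list \<Rightarrow> ('a \<times> 'a) list" where
  "next_word tri w = zip (tl w @ [tri]) w"

definition Next :: "'a set \<Rightarrow> 'a \<Rightarrow> 'a list set \<Rightarrow> ('a \<times> 'a) list set" where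
  "Next \<Sigma> tri L = {next_word tri w | w. w \<in> L \<and> w \<in> lists \<Sigma> \<and> w \<noteq> []}"

text \<open>States and stack symbols are natural numbers; Gamma^{<=1} is rendered as option
  (None = epsilon).\<close>

record ('q, 'g, 'd) mpda =
  states :: "'q set"
  outputs :: "'d set"
  stack :: "'g set"
  trans :: "('q \<times> 'g option \<times> 'g option \<times> 'q) set"
  out :: "'q \<Rightarrow> 'd"
  initial :: "'q set"
  final :: "'q set"

definition opt_list :: "'g option \<Rightarrow> 'g list" where
  "opt_list x = (case x of None \<Rightarrow> [] | Some g \<Rightarrow> [g])"

definition mpda_wf :: "('q, 'g, 'd) mpda \<Rightarrow> bool" where
  "mpda_wf A \<longleftrightarrow> finite (states A) \<and> finite (outputs A) \<and> finite (stack A)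
     \<and> (\<forall>(q, \<gamma>, \<gamma>', q') \<in> trans A. q \<in> states A \<and> q' \<in> states A
          \<and> set_option \<gamma> \<subseteq> stack A \<and> set_option \<gamma>' \<subseteq> stack A
          \<and> \<not> (\<gamma> \<noteq> None \<and> \<gamma>' \<noteq> None))
     \<and> (\<forall>q \<in> states A. out A q \<in> outputs A)
     \<and> initial A \<subseteq> states A \<and> final A \<subseteq> states A"

definition mpda_move :: "('q, 'g, 'd) mpda \<Rightarrow> 'q \<times> 'g list \<Rightarrow> 'q \<times> 'g list \<Rightarrow> bool" where
  "mpda_move A c c' \<longleftrightarrow> (\<exists>\<gamma> \<gamma>' \<alpha>. (fst c, \<gamma>, \<gamma>', fst c') \<in> trans A
      \<and> snd c = opt_list \<gamma> @ \<alpha> \<and> snd c' = opt_list \<gamma>' @ \<alpha> \<and> snd c \<noteq> [])"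

definition mpda_run :: "('q, 'g, 'd) mpda \<Rightarrow> ('q \<times> 'g list) list \<Rightarrow> bool" where
  "mpda_run A cs \<longleftrightarrow> cs \<noteq> []
     \<and> fst (hd cs) \<in> initial A \<and> (\<exists>g \<in> stack A. snd (hd cs) = [g])
     \<and> fst (last cs) \<in> final A \<and> snd (last cs) = []
     \<and> (\<forall>i. Suc i < length cs \<longrightarrow> mpda_move A (cs ! i) (cs ! Suc i))"

definition mpda_lang :: "('q, 'g, 'd) mpda \<Rightarrow> 'd list set" where
  "mpda_lang A = {map (out A \<circ> fst) cs | cs. mpda_run A cs}"

definition pop_normalized :: "('q, 'g, 'd) mpda \<Rightarrow> bool" where
  "pop_normalized A \<longleftrightarrow> (\<exists>ret :: 'g \<Rightarrow> 'q. (\<forall>g \<in> stack A. ret g \<in> states A)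
     \<and> (\<forall>q g q'. (q, Some g, None, q') \<in> trans A \<longrightarrow> q' = ret g))"

end

theory Submission
  imports Defs "HOL-Library.Sublist"
begin

(* What the grammar still has to produce after each letter
   is a sequence of items (Z, E, \<beta>): the rest \<beta> of a production body, followed by the completion
   of E as a left corner of Z. Reading the next letter a replaces the first item by at most two:
   one for the left-corner chain ending in a, one for what follows it on that chain. All items are
   built from symbols and suffixes of right-hand sides, so there are finitely many, and a
   push-down automaton keeps the first item in its state and the others on its stack. Each state
   also guesses the lookahead letter, so that it can output the pair (next letter, current letter)
   required by Next. Stack symbols are themselves states, resumed when popped, which makes the
   automaton pop-normalized; finally its states and stack symbols are renamed into nat. *)

inductive generates :: "'a cfg_prods \<Rightarrow> (nat + 'a) list \<Rightarrow> 'a list \<Rightarrow> bool" for P where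
  generates_Nil: "generates P [] []"
| generates_Inr: "generates P xs w \<Longrightarrow> generates P (Inr a # xs) (a # w)"
| generates_Inl: "(A, \<alpha>) \<in> P \<Longrightarrow> generates P \<alpha> u \<Longrightarrow> generates P xs v
    \<Longrightarrow> generates P (Inl A # xs) (u @ v)"

lemma generates_appendI:
  "generates P xs u \<Longrightarrow> generates P ys v \<Longrightarrow> generates P (xs @ ys) (u @ v)"
proof (induction rule: generates.induct)
  case (generates_Inl A \<alpha> u xs v')
  then show ?case
    using generates.generates_Inl[OF generates_Inl.hyps(1,2) generates_Inl.IH(2)] by simp
qed (simp_all add: generates.generates_Inr)

lemma generates_appendD:
  "generates P (xs @ ys) w \<Longrightarrow> \<exists>u v. w = u @ v \<and> generates P xs u \<and> generates P ys v"
proof (induction xs arbitrary: w)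
  case Nil
  then show ?case by (intro exI[of _ "[]"] exI[of _ w]) (simp add: generates_Nil)
next
  case (Cons x xs)
  from Cons.prems show ?case
  proof (cases rule: generates.cases)
    case (generates_Inr xs' w' a)
    then have "generates P (xs @ ys) w'" by simp
    then obtain u v where "w' = u @ v" "generates P xs u" "generates P ys v"
      using Cons.IH by blast
    with generates_Inr show ?thesis
      by (intro exI[of _ "a # u"] exI[of _ v]) (simp add: generates.generates_Inr)
  next
    case (generates_Inl A \<alpha> u' xs' v')
    then have "generates P (xs @ ys) v'" by simp
    then obtain u v where "v' = u @ v" "generates P xs u" "generates P ys v"
      using Cons.IH by blast
    with generates_Inl show ?thesis
      by (intro exI[of _ "u' @ u"] exI[of _ v]) (simp add: generates.generates_Inl)
  qed simp
qed

lemma generates_append: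
  "generates P (xs @ ys) w \<longleftrightarrow> (\<exists>u v. w = u @ v \<and> generates P xs u \<and> generates P ys v)"
  using generates_appendD generates_appendI by blast

lemma generates_Nil_iff [simp]: "generates P [] w \<longleftrightarrow> w = []"
  using generates.cases generates_Nil by blast

lemma generates_Inr_iff [simp]: "generates P [Inr a] w \<longleftrightarrow> w = [a]"
  by (auto intro: generates.intros elim: generates.cases)

lemma generates_Inl_iff: "generates P [Inl A] w \<longleftrightarrow> (\<exists>\<alpha>. (A, \<alpha>) \<in> P \<and> generates P \<alpha> w)"
proof
  assume "generates P [Inl A] w"
  then show "\<exists>\<alpha>. (A, \<alpha>) \<in> P \<and> generates P \<alpha> w"
    by (cases rule: generates.cases) auto
next
  assume "\<exists>\<alpha>. (A, \<alpha>) \<in> P \<and> generates P \<alpha> w"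
  then show "generates P [Inl A] w"
    using generates_Inl[of A _ P w "[]" "[]"] generates_Nil by auto
qed

lemma generates_map_Inr: "generates P (map Inr w) w"
  by (induction w) (simp_all add: generates_Inr)

lemma cfg_step_append_context: "cfg_step P u v \<Longrightarrow> cfg_step P (l @ u @ r) (l @ v @ r)"
  unfolding cfg_step_def by (metis append.assoc)

lemma cfg_steps_append_context:
  "(cfg_step P)\<^sup>*\<^sup>* u v \<Longrightarrow> (cfg_step P)\<^sup>*\<^sup>* (l @ u @ r) (l @ v @ r)"
  by (induction rule: rtranclp_induct)
    (auto intro: rtranclp.rtrancl_into_rtrancl cfg_step_append_context)

lemma generates_imp_cfg_steps: "generates P xs w \<Longrightarrow> (cfg_step P)\<^sup>*\<^sup>* xs (map Inr w)"
proof (induction rule: generates.induct)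
  case (generates_Inr xs w a)
  then show ?case using cfg_steps_append_context[of P xs _ "[Inr a]" "[]"] by simp
next
  case (generates_Inl A \<alpha> u xs v)
  have "cfg_step P (Inl A # xs) (\<alpha> @ xs)"
    unfolding cfg_step_def using generates_Inl.hyps(1) by (metis append_Cons append_Nil)
  moreover have "(cfg_step P)\<^sup>*\<^sup>* (\<alpha> @ xs) (map Inr u @ xs)"
    using cfg_steps_append_context[OF generates_Inl.IH(1), of "[]" xs] by simp
  moreover have "(cfg_step P)\<^sup>*\<^sup>* (map Inr u @ xs) (map Inr u @ map Inr v)"
    using cfg_steps_append_context[OF generates_Inl.IH(2), of "map Inr u" "[]"] by simp
  ultimately show ?case by simp
qed simp

lemma cfg_step_generates: "cfg_step P u v \<Longrightarrow> generates P v w \<Longrightarrow> generates P u w"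
proof -
  assume "cfg_step P u v" "generates P v w"
  then obtain l r A \<alpha> where "(A, \<alpha>) \<in> P" "u = l @ [Inl A] @ r" "v = l @ \<alpha> @ r"
    unfolding cfg_step_def by blast
  with \<open>generates P v w\<close> obtain w1 w2 w3
    where "w = w1 @ w2 @ w3" "generates P l w1" "generates P \<alpha> w2" "generates P r w3"
    by (auto simp: generates_append)
  with \<open>(A, \<alpha>) \<in> P\<close> \<open>u = l @ [Inl A] @ r\<close> show ?thesis
    by (auto intro!: generates_appendI generates_Inl)
qed

lemma cfg_lang_eq_generates: "cfg_lang P S = {w. generates P [Inl S] w}"
proof -
  have "generates P xs w" if "(cfg_step P)\<^sup>*\<^sup>* xs (map Inr w)" for xs w
    using that by (induction rule: converse_rtranclp_induct)
      (auto intro: cfg_step_generates generates_map_Inr)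
  then show ?thesis
    unfolding cfg_lang_def using generates_imp_cfg_steps by blast
qed

text \<open>\<open>left_corner P Z X v\<close>: along a chain of productions \<open>D \<rightarrow> \<alpha> X' \<beta>\<close> with nullable \<open>\<alpha>\<close>,
  \<open>Z\<close> derives \<open>X\<close> followed by the \<open>\<beta>\<close>'s, which generate \<open>v\<close>.\<close>

inductive left_corner :: "'a cfg_prods \<Rightarrow> nat + 'a \<Rightarrow> nat + 'a \<Rightarrow> 'a list \<Rightarrow> bool" for P where
  left_corner_refl: "left_corner P Z Z []"
| left_corner_step: "(D, \<alpha> @ X # \<beta>) \<in> P \<Longrightarrow> generates P \<alpha> [] \<Longrightarrow> generates P \<beta> u
    \<Longrightarrow> left_corner P Z (Inl D) v \<Longrightarrow> left_corner P Z X (u @ v)"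

lemma generates_nullable_prefixI:
  "generates P xs [] \<Longrightarrow> generates P [Y] y \<Longrightarrow> generates P ys w \<Longrightarrow> generates P (xs @ Y # ys) (y @ w)"
  using generates_appendI[of P xs "[]" "Y # ys" "y @ w"] generates_appendI[of P "[Y]" y ys w]
  by simp

lemma left_corner_generates: "left_corner P Z X v \<Longrightarrow> generates P [X] u \<Longrightarrow> generates P [Z] (u @ v)"
proof (induction arbitrary: u rule: left_corner.induct)
  case (left_corner_step D \<alpha> X \<beta> u' Z v)
  then have "generates P [Inl D] (u @ u')"
    using generates_nullable_prefixI generates_Inl_iff by blast
  then show ?case using left_corner_step.IH by fastforce
qed simp

lemma left_corner_trans: "left_corner P Y X v \<Longrightarrow> left_corner P Z Y v' \<Longrightarrow> left_corner P Z X (v @ v')"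
proof (induction rule: left_corner.induct)
  case (left_corner_step D \<alpha> X \<beta> u Y v)
  then show ?case using left_corner.left_corner_step[of D \<alpha> X \<beta> P u Z "v @ v'"] by simp
qed simp

lemma generates_Cons_left_corner:
  "generates P xs v \<Longrightarrow> v = a # w \<Longrightarrow> \<exists>xs1 Y xs2 y w2. xs = xs1 @ Y # xs2 \<and> generates P xs1 []
     \<and> left_corner P Y (Inr a) y \<and> generates P xs2 w2 \<and> w = y @ w2"
proof (induction arbitrary: w rule: generates.induct)
  case (generates_Inr xs w' b)
  then show ?case using left_corner_refl
    by (intro exI[of _ "[]"] exI[of _ "Inr a"] exI[of _ xs] exI[of _ "[]"] exI[of _ w']) simp
next
  case (generates_Inl A \<alpha> u xs v)
  show ?case
  proof (cases u)
    case Nil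
    with generates_Inl.prems generates_Inl.IH(2) obtain xs1 Y xs2 y w2
      where split: "xs = xs1 @ Y # xs2" "generates P xs1 []"
      "left_corner P Y (Inr a) y" "generates P xs2 w2" "w = y @ w2"
      by auto
    have "generates P (Inl A # xs1) []"
      using generates.generates_Inl[OF generates_Inl.hyps(1,2) split(2)] Nil by simp
    with split show ?thesis by (intro exI[of _ "Inl A # xs1"]) auto
  next
    case (Cons b u')
    with generates_Inl.prems generates_Inl.IH(1) obtain xs1 Y xs2 y w2
      where split: "\<alpha> = xs1 @ Y # xs2" "generates P xs1 []"
      "left_corner P Y (Inr a) y" "generates P xs2 w2" "u' = y @ w2" "w = u' @ v"
      by auto
    have "left_corner P (Inl A) Y (w2 @ [])"
      by (rule left_corner_step[OF _ split(2) split(4) left_corner_refl])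
        (use generates_Inl.hyps(1) split(1) in simp)
    with split(3) have "left_corner P (Inl A) (Inr a) (y @ w2)"
      using left_corner_trans by fastforce
    with split generates_Inl.hyps(3) show ?thesis
      by (intro exI[of _ "[]"] exI[of _ "Inl A"] exI[of _ xs] exI[of _ "y @ w2"] exI[of _ v]) simp
  qed
qed simp

lemma left_corner_of_generates: "generates P [Z] (a # w) \<Longrightarrow> left_corner P Z (Inr a) w"
  by (auto simp: Cons_eq_append_conv dest!: generates_Cons_left_corner[OF _ refl])

definition rhs_symbols :: "'a cfg_prods \<Rightarrow> (nat + 'a) set" where
  "rhs_symbols P = (\<Union>(A, \<alpha>) \<in> P. set \<alpha>)"

definition rhs_suffixes :: "'a cfg_prods \<Rightarrow> (nat + 'a) list set" where
  "rhs_suffixes P = insert [] {\<beta>. \<exists>(A, \<alpha>) \<in> P. suffix \<beta> \<alpha>}"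

lemma finite_rhs_symbols: "finite P \<Longrightarrow> finite (rhs_symbols P)"
  unfolding rhs_symbols_def by auto

lemma finite_rhs_suffixes: "finite P \<Longrightarrow> finite (rhs_suffixes P)"
proof -
  assume "finite P"
  moreover have "{\<beta>. \<exists>(A, \<alpha>) \<in> P. suffix \<beta> \<alpha>} = (\<Union>(A, \<alpha>) \<in> P. set (suffixes \<alpha>))"
    by fastforce
  ultimately show ?thesis unfolding rhs_suffixes_def by (simp add: case_prod_beta)
qed

lemma rhs_suffixes_production: "(D, \<alpha> @ \<beta>) \<in> P \<Longrightarrow> \<beta> \<in> rhs_suffixes P"
  unfolding rhs_suffixes_def by (auto intro: suffixI)

lemma rhs_suffixes_split:
  assumes "xs1 @ Y # xs2 \<in> rhs_suffixes P"
  shows "Y \<in> rhs_symbols P" "xs2 \<in> rhs_suffixes P"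
proof -
  from assms obtain A \<alpha> where "(A, \<alpha>) \<in> P" "suffix (xs1 @ Y # xs2) \<alpha>"
    unfolding rhs_suffixes_def by auto
  then obtain zs where prod: "(A, (zs @ xs1 @ [Y]) @ xs2) \<in> P"
    by (auto elim: suffixE)
  then show "Y \<in> rhs_symbols P"
    unfolding rhs_symbols_def by force
  from prod show "xs2 \<in> rhs_suffixes P"
    by (rule rhs_suffixes_production)
qed

text \<open>Reading the first letter \<open>a\<close> off a left-corner word: \<open>a\<close> starts the part generated by
  the right context of some production \<open>D \<rightarrow> \<alpha> X \<beta>\<close> on the chain, at a symbol \<open>Y\<close> of \<open>\<beta>\<close>.\<close>

lemma left_corner_Cons_split:
  "left_corner P Z E v \<Longrightarrow> v = a # x \<Longrightarrow>
   \<exists>Y D \<gamma> x1 x2 x3. x = x1 @ x2 @ x3 \<and> left_corner P Y (Inr a) x1 \<and> generates P \<gamma> x2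
     \<and> left_corner P Z (Inl D) x3 \<and> Y \<in> rhs_symbols P \<and> D \<in> Domain P \<and> \<gamma> \<in> rhs_suffixes P
     \<and> (\<forall>y u. generates P [Y] y \<longrightarrow> generates P \<gamma> u \<longrightarrow> left_corner P (Inl D) E (y @ u))"
proof (induction arbitrary: x rule: left_corner.induct)
  case (left_corner_step D \<alpha> X \<beta> u Z v)
  show ?case
  proof (cases u)
    case Nil
    with left_corner_step.prems have "v = a # x" by simp
    then obtain Y D' \<gamma> x1 x2 x3 where
      split: "x = x1 @ x2 @ x3" "left_corner P Y (Inr a) x1" "generates P \<gamma> x2"
        "left_corner P Z (Inl D') x3" "Y \<in> rhs_symbols P" "D' \<in> Domain P" "\<gamma> \<in> rhs_suffixes P"
      and recombine: "\<forall>y u. generates P [Y] y \<longrightarrow> generates P \<gamma> u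
        \<longrightarrow> left_corner P (Inl D') (Inl D) (y @ u)"
      using left_corner_step.IH[OF \<open>v = a # x\<close>] by blast
    have "left_corner P (Inl D') X (y @ w)" if "generates P [Y] y" "generates P \<gamma> w" for y w
      using left_corner.left_corner_step[OF left_corner_step.hyps(1,2) _
          recombine[rule_format, OF that]]
        left_corner_step.hyps(3) Nil by fastforce
    with split show ?thesis
      by (intro exI[of _ Y] exI[of _ D'] exI[of _ \<gamma>] exI[of _ x1] exI[of _ x2] exI[of _ x3]) simp
  next
    case (Cons b u')
    with left_corner_step.prems have "u = a # u'" "x = u' @ v" by auto
    then obtain xs1 Y xs2 y w2 where split: "\<beta> = xs1 @ Y # xs2" "generates P xs1 []"
      "left_corner P Y (Inr a) y" "generates P xs2 w2" "u' = y @ w2"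
      using generates_Cons_left_corner[OF left_corner_step.hyps(3) \<open>u = a # u'\<close>] by blast
    have "\<beta> \<in> rhs_suffixes P"
      using rhs_suffixes_production[of D "\<alpha> @ [X]" \<beta>] left_corner_step.hyps(1) by simp
    then have "Y \<in> rhs_symbols P" "xs2 \<in> rhs_suffixes P"
      using rhs_suffixes_split split(1) by auto
    moreover have "D \<in> Domain P" using left_corner_step.hyps(1) by auto
    moreover have "left_corner P (Inl D) X (y' @ u'')"
      if "generates P [Y] y'" "generates P xs2 u''" for y' u''
      using left_corner.left_corner_step[OF left_corner_step.hyps(1,2) _ left_corner_refl]
        generates_nullable_prefixI[OF split(2) that] split(1) by simp
    ultimately show ?thesis using split \<open>x = u' @ v\<close> left_corner_step.hyps(4)
      by (intro exI[of _ Y] exI[of _ D] exI[of _ xs2] exI[of _ y] exI[of _ w2] exI[of _ v]) simp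
  qed
qed simp

type_synonym 'a item = "(nat + 'a) \<times> (nat + 'a) \<times> (nat + 'a) list"

text \<open>An item \<open>(Z, E, \<beta>)\<close>: the rest \<open>\<beta>\<close> of a production body is still to be generated, after which
  \<open>E\<close> is completed and must be continued as a left corner of \<open>Z\<close>.\<close>

fun item_yields :: "'a cfg_prods \<Rightarrow> 'a item \<Rightarrow> 'a list \<Rightarrow> bool" where
  "item_yields P (Z, E, \<beta>) w \<longleftrightarrow> (\<exists>u v. w = u @ v \<and> generates P \<beta> u \<and> left_corner P Z E v)"

lemma item_yieldsI: "generates P \<beta> u \<Longrightarrow> left_corner P Z E v \<Longrightarrow> item_yields P (Z, E, \<beta>) (u @ v)"
  by auto

fun items_yield :: "'a cfg_prods \<Rightarrow> 'a item list \<Rightarrow> 'a list \<Rightarrow> bool" where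
  "items_yield P [] w \<longleftrightarrow> w = []"
| "items_yield P (I # Is) w \<longleftrightarrow> (\<exists>u v. w = u @ v \<and> item_yields P I u \<and> items_yield P Is v)"

lemma items_yield_append:
  "items_yield P (Is @ Js) w \<longleftrightarrow> (\<exists>u v. w = u @ v \<and> items_yield P Is u \<and> items_yield P Js v)"
proof (induction Is arbitrary: w)
  case (Cons I Is)
  show ?case
  proof
    assume "items_yield P ((I # Is) @ Js) w"
    then obtain u v1 v2 where "w = u @ v1 @ v2" "item_yields P I u" "items_yield P Is v1"
      "items_yield P Js v2"
      using Cons.IH by auto
    then show "\<exists>u v. w = u @ v \<and> items_yield P (I # Is) u \<and> items_yield P Js v"
      by (intro exI[of _ "u @ v1"] exI[of _ v2]) auto
  next
    assume "\<exists>u v. w = u @ v \<and> items_yield P (I # Is) u \<and> items_yield P Js v"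
    then obtain u1 u2 v where "w = u1 @ u2 @ v" "item_yields P I u1" "items_yield P Is u2"
      "items_yield P Js v"
      by auto
    then show "items_yield P ((I # Is) @ Js) w"
      using Cons.IH by auto
  qed
qed simp

lemma items_yield_filter_nonempty:
  assumes "\<forall>(I, v) \<in> set ps. item_yields P I v"
    and "items_yield P (map fst (filter (\<lambda>(I, v). v \<noteq> []) ps)) w"
  shows "items_yield P (map fst ps) w"
  using assms
proof (induction ps arbitrary: w)
  case (Cons p ps)
  obtain I v where p: "p = (I, v)" by fastforce
  show ?case
  proof (cases "v = []")
    case True
    with Cons p have "items_yield P (map fst ps) w" "item_yields P I []" by auto
    then have "items_yield P (I # map fst ps) ([] @ w)" by (simp only: items_yield.simps) blast
    with p show ?thesis by simp
  next
    case False
    with Cons.prems p obtain u w' where "w = u @ w'" "item_yields P I u"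
      "items_yield P (map fst (filter (\<lambda>(I, v). v \<noteq> []) ps)) w'"
      by auto
    with Cons p show ?thesis by auto
  qed
qed simp

definition read_step :: "'a cfg_prods \<Rightarrow> 'a item \<Rightarrow> 'a \<Rightarrow> 'a item list \<Rightarrow> bool" where
  "read_step P I a Is \<longleftrightarrow> (\<forall>w. items_yield P Is w \<longrightarrow> item_yields P I (a # w))"

lemma read_step_items_yield:
  "read_step P I a Is \<Longrightarrow> items_yield P (Is @ Js) w \<Longrightarrow> items_yield P (I # Js) (a # w)"
proof -
  assume "read_step P I a Is" "items_yield P (Is @ Js) w"
  then obtain u v where "w = u @ v" "item_yields P I (a # u)" "items_yield P Js v"
    unfolding read_step_def items_yield_append by blast
  then show ?thesis by (simp only: items_yield.simps) (intro exI[of _ "a # u"] exI[of _ v], simp)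
qed

lemma read_step_filter_nonempty:
  "read_step P I a (map fst ps) \<Longrightarrow> \<forall>(J, v) \<in> set ps. item_yields P J v
    \<Longrightarrow> read_step P I a (map fst (filter (\<lambda>(J, v). v \<noteq> []) ps))"
  unfolding read_step_def using items_yield_filter_nonempty by blast

lemma read_step_pairI:
  assumes "\<And>y u x. generates P [Y] (a # y) \<Longrightarrow> generates P \<gamma> u \<Longrightarrow> left_corner P Z F x
    \<Longrightarrow> item_yields P (Z, E, \<beta>) (a # y @ u @ x)"
  shows "read_step P (Z, E, \<beta>) a [(Y, Inr a, []), (Z, F, \<gamma>)]"
  unfolding read_step_def
proof (intro allI impI)
  fix w
  assume "items_yield P [(Y, Inr a, []), (Z, F, \<gamma>)] w"
  then obtain y u x where "w = y @ u @ x" "left_corner P Y (Inr a) y" "generates P \<gamma> u"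
    "left_corner P Z F x"
    by (simp only: items_yield.simps item_yields.simps generates_Nil_iff) force
  moreover have "generates P [Y] (a # y)"
    using left_corner_generates[OF \<open>left_corner P Y (Inr a) y\<close>, of "[a]"] by simp
  ultimately show "item_yields P (Z, E, \<beta>) (a # w)" using assms by simp
qed

lemma read_step_from_left_corner:
  assumes "generates P \<beta> []" and "left_corner P Z E (a # x)"
  obtains Y D \<gamma> x1 x2 where "x = x1 @ x2" "item_yields P (Y, Inr a, []) x1"
    "item_yields P (Z, Inl D, \<gamma>) x2" "read_step P (Z, E, \<beta>) a [(Y, Inr a, []), (Z, Inl D, \<gamma>)]"
    "Y \<in> rhs_symbols P" "D \<in> Domain P" "\<gamma> \<in> rhs_suffixes P"
proof -
  obtain Y D \<gamma> x1 x2 x3 where split: "x = x1 @ x2 @ x3" "left_corner P Y (Inr a) x1"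
    "generates P \<gamma> x2" "left_corner P Z (Inl D) x3" "Y \<in> rhs_symbols P" "D \<in> Domain P"
    "\<gamma> \<in> rhs_suffixes P"
    and recombine: "\<forall>y u. generates P [Y] y \<longrightarrow> generates P \<gamma> u \<longrightarrow> left_corner P (Inl D) E (y @ u)"
    using left_corner_Cons_split[OF assms(2) refl] by (elim exE conjE) (rule that)
  have "read_step P (Z, E, \<beta>) a [(Y, Inr a, []), (Z, Inl D, \<gamma>)]"
  proof (rule read_step_pairI)
    fix y w x'
    assume "generates P [Y] (a # y)" "generates P \<gamma> w" "left_corner P Z (Inl D) x'"
    then have "left_corner P Z E (((a # y) @ w) @ x')"
      using recombine left_corner_trans by blast
    then have "item_yields P (Z, E, \<beta>) ([] @ ((a # y) @ w) @ x')"
      using assms(1) by (intro item_yieldsI) simp_all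
    then show "item_yields P (Z, E, \<beta>) (a # y @ w @ x')" by simp
  qed
  with split show ?thesis by (intro that[of x1 "x2 @ x3" Y D \<gamma>]) auto
qed

lemma read_step_from_rest:
  assumes "generates P \<beta> (a # u)" and "\<beta> \<in> rhs_suffixes P"
  obtains Y \<gamma> x1 x2 where "u = x1 @ x2" "item_yields P (Y, Inr a, []) x1" "generates P \<gamma> x2"
    "read_step P (Z, E, \<beta>) a [(Y, Inr a, []), (Z, E, \<gamma>)]" "Y \<in> rhs_symbols P" "\<gamma> \<in> rhs_suffixes P"
proof -
  obtain xs1 Y xs2 y w2 where split: "\<beta> = xs1 @ Y # xs2" "generates P xs1 []"
    "left_corner P Y (Inr a) y" "generates P xs2 w2" "u = y @ w2"
    using generates_Cons_left_corner[OF assms(1) refl] by (elim exE conjE) (rule that)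
  have "read_step P (Z, E, \<beta>) a [(Y, Inr a, []), (Z, E, xs2)]"
  proof (rule read_step_pairI)
    fix y' w x'
    assume "generates P [Y] (a # y')" "generates P xs2 w" "left_corner P Z E x'"
    then have "item_yields P (Z, E, \<beta>) (((a # y') @ w) @ x')"
      using item_yieldsI generates_nullable_prefixI[OF split(2)] split(1) by metis
    then show "item_yields P (Z, E, \<beta>) (a # y' @ w @ x')" by simp
  qed
  moreover have "Y \<in> rhs_symbols P" "xs2 \<in> rhs_suffixes P"
    using rhs_suffixes_split assms(2) split(1) by auto
  ultimately show ?thesis using split by (intro that[of y w2 Y xs2]) auto
qed

lemma item_yields_Cons_split:
  assumes "item_yields P (Z, E, \<beta>) (a # x)" and "\<beta> \<in> rhs_suffixes P"
  obtains Y F \<gamma> x1 x2 where "x = x1 @ x2" "item_yields P (Y, Inr a, []) x1"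
    "item_yields P (Z, F, \<gamma>) x2" "read_step P (Z, E, \<beta>) a [(Y, Inr a, []), (Z, F, \<gamma>)]"
    "Y \<in> rhs_symbols P" "F = E \<or> F \<in> Inl ` Domain P" "\<gamma> \<in> rhs_suffixes P"
proof -
  from assms(1) obtain u v where uv: "a # x = u @ v" "generates P \<beta> u" "left_corner P Z E v"
    unfolding item_yields.simps by blast
  show ?thesis
  proof (cases u)
    case Nil
    with uv have "generates P \<beta> []" "left_corner P Z E (a # x)" by simp_all
    then obtain Y D \<gamma> x1 x2 where "x = x1 @ x2" "item_yields P (Y, Inr a, []) x1"
      "item_yields P (Z, Inl D, \<gamma>) x2" "read_step P (Z, E, \<beta>) a [(Y, Inr a, []), (Z, Inl D, \<gamma>)]"
      "Y \<in> rhs_symbols P" "D \<in> Domain P" "\<gamma> \<in> rhs_suffixes P"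
      by (rule read_step_from_left_corner)
    then show ?thesis by (intro that[of x1 x2 Y "Inl D" \<gamma>]) auto
  next
    case (Cons b u')
    with uv have "generates P \<beta> (a # u')" "x = u' @ v" by auto
    then obtain Y \<gamma> x1 x2 where "u' = x1 @ x2" "item_yields P (Y, Inr a, []) x1" "generates P \<gamma> x2"
      "read_step P (Z, E, \<beta>) a [(Y, Inr a, []), (Z, E, \<gamma>)]" "Y \<in> rhs_symbols P" "\<gamma> \<in> rhs_suffixes P"
      using assms(2) by (elim read_step_from_rest)
    with \<open>x = u' @ v\<close> uv(3) show ?thesis
      by (intro that[of x1 "x2 @ v" Y E \<gamma>]) (auto intro: item_yieldsI)
  qed
qed

lemma map_opt_list: "map h (opt_list x) = opt_list (map_option h x)"
  by (cases x) (simp_all add: opt_list_def)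

lemma mpda_move_internal: "(p, None, None, p') \<in> trans A \<Longrightarrow> \<sigma> \<noteq> [] \<Longrightarrow> mpda_move A (p, \<sigma>) (p', \<sigma>)"
  unfolding mpda_move_def by (intro exI[of _ None] exI[of _ \<sigma>]) (simp add: opt_list_def)

lemma mpda_move_push:
  "(p, None, Some g, p') \<in> trans A \<Longrightarrow> \<sigma> \<noteq> [] \<Longrightarrow> mpda_move A (p, \<sigma>) (p', g # \<sigma>)"
  unfolding mpda_move_def
  by (intro exI[of _ None] exI[of _ "Some g"] exI[of _ \<sigma>]) (simp add: opt_list_def)

lemma mpda_move_pop: "(p, Some g, None, p') \<in> trans A \<Longrightarrow> mpda_move A (p, g # \<sigma>) (p', \<sigma>)"
  unfolding mpda_move_def
  by (intro exI[of _ "Some g"] exI[of _ None] exI[of _ \<sigma>]) (simp add: opt_list_def)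

lemma mpda_move_cases [consumes 2, case_names internal push pop]:
  assumes "mpda_wf A" and "mpda_move A (p, \<sigma>) (p', \<sigma>')"
  obtains (internal) "(p, None, None, p') \<in> trans A" "\<sigma>' = \<sigma>" "\<sigma> \<noteq> []"
    | (push) g where "(p, None, Some g, p') \<in> trans A" "\<sigma>' = g # \<sigma>" "\<sigma> \<noteq> []"
    | (pop) g where "(p, Some g, None, p') \<in> trans A" "\<sigma> = g # \<sigma>'"
proof -
  from assms(2) obtain \<gamma> \<gamma>' \<alpha> where t: "(p, \<gamma>, \<gamma>', p') \<in> trans A"
    and \<sigma>: "\<sigma> = opt_list \<gamma> @ \<alpha>" "\<sigma>' = opt_list \<gamma>' @ \<alpha>" "\<sigma> \<noteq> []"
    unfolding mpda_move_def by auto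
  from assms(1) t have "\<gamma> = None \<or> \<gamma>' = None" unfolding mpda_wf_def by fastforce
  with t \<sigma> that show ?thesis by (cases \<gamma>; cases \<gamma>') (auto simp: opt_list_def)
qed

lemma mpda_move_stack_nonempty: "mpda_move A c c' \<Longrightarrow> snd c \<noteq> []"
  unfolding mpda_move_def by blast

lemma mpda_move_target_state: "mpda_wf A \<Longrightarrow> mpda_move A c c' \<Longrightarrow> fst c' \<in> states A"
  unfolding mpda_wf_def mpda_move_def by fastforce

lemma successively_mpda_move_states:
  assumes "mpda_wf A" "successively (mpda_move A) cs" "fst (hd cs) \<in> states A"
  shows "\<forall>c \<in> set cs. fst c \<in> states A"
  using assms(2,3)
proof (induction cs)
  case (Cons c cs)
  show ?case
  proof (cases cs)
    case (Cons c' cs')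
    with Cons.prems have "fst c' \<in> states A"
      using mpda_move_target_state[OF assms(1), of c c'] by simp
    with Cons.IH Cons.prems \<open>cs = c' # cs'\<close> show ?thesis by simp
  qed (use Cons.prems in simp)
qed simp

lemma mpda_run_iff:
  "mpda_run A cs \<longleftrightarrow> cs \<noteq> [] \<and> fst (hd cs) \<in> initial A \<and> (\<exists>g \<in> stack A. snd (hd cs) = [g])
     \<and> fst (last cs) \<in> final A \<and> snd (last cs) = [] \<and> successively (mpda_move A) cs"
  unfolding mpda_run_def successively_conv_nth by blast

definition mpda_rename :: "('q, 'g, 'd) mpda \<Rightarrow> ('q \<Rightarrow> 'q2) \<Rightarrow> ('g \<Rightarrow> 'g2) \<Rightarrow> ('q2, 'g2, 'd) mpda" where
  "mpda_rename A f h = \<lparr>states = f ` states A, outputs = outputs A, stack = h ` stack A,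
     trans = (\<lambda>(q, \<gamma>, \<gamma>', q'). (f q, map_option h \<gamma>, map_option h \<gamma>', f q')) ` trans A,
     out = out A \<circ> inv_into (states A) f, initial = f ` initial A, final = f ` final A\<rparr>"

lemma mpda_wf_rename: "mpda_wf A \<Longrightarrow> mpda_wf (mpda_rename A f h)"
  unfolding mpda_wf_def
proof (elim conjE, intro conjI ballI)
  fix t assume wf: "\<forall>(q, \<gamma>, \<gamma>', q') \<in> trans A. q \<in> states A \<and> q' \<in> states A \<and>
    set_option \<gamma> \<subseteq> stack A \<and> set_option \<gamma>' \<subseteq> stack A \<and> \<not> (\<gamma> \<noteq> None \<and> \<gamma>' \<noteq> None)"
    and "t \<in> trans (mpda_rename A f h)"
  then obtain q \<gamma> \<gamma>' q' where "t = (f q, map_option h \<gamma>, map_option h \<gamma>', f q')"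
    "(q, \<gamma>, \<gamma>', q') \<in> trans A"
    by (auto simp: mpda_rename_def)
  with wf show "case t of (q, \<gamma>, \<gamma>', q') \<Rightarrow>
    q \<in> states (mpda_rename A f h) \<and> q' \<in> states (mpda_rename A f h)
    \<and> set_option \<gamma> \<subseteq> stack (mpda_rename A f h) \<and> set_option \<gamma>' \<subseteq> stack (mpda_rename A f h)
    \<and> \<not> (\<gamma> \<noteq> None \<and> \<gamma>' \<noteq> None)"
    by (auto simp: mpda_rename_def)
next
  fix q assume "\<forall>q \<in> states A. out A q \<in> outputs A" "q \<in> states (mpda_rename A f h)"
  then show "out (mpda_rename A f h) q \<in> outputs (mpda_rename A f h)"
    by (auto simp: mpda_rename_def inv_into_into)
qed (auto simp: mpda_rename_def)

lemma pop_normalized_rename: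
  assumes "mpda_wf A" "pop_normalized A" "inj_on h (stack A)"
  shows "pop_normalized (mpda_rename A f h)"
proof -
  from assms(2) obtain ret where ret: "\<forall>g \<in> stack A. ret g \<in> states A"
    "\<forall>q g q'. (q, Some g, None, q') \<in> trans A \<longrightarrow> q' = ret g"
    unfolding pop_normalized_def by blast
  have "q' = f (ret (inv_into (stack A) h g))"
    if "(q, Some g, None, q') \<in> trans (mpda_rename A f h)" for q g q'
  proof -
    from that obtain q0 \<gamma> \<gamma>' q0' where t: "(q0, \<gamma>, \<gamma>', q0') \<in> trans A"
      "Some g = map_option h \<gamma>" "None = map_option h \<gamma>'" "q' = f q0'"
      by (auto simp: mpda_rename_def)
    then obtain g0 where "\<gamma> = Some g0" "g = h g0" by (cases \<gamma>) auto
    with t have "(q0, Some g0, None, q0') \<in> trans A" "g = h g0" "q' = f q0'" by auto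
    moreover from this assms(1) have "g0 \<in> stack A" unfolding mpda_wf_def by fastforce
    ultimately show ?thesis using ret(2) assms(3) by auto
  qed
  then show ?thesis unfolding pop_normalized_def using ret(1)
    by (intro exI[of _ "\<lambda>g. f (ret (inv_into (stack A) h g))"])
      (auto simp: mpda_rename_def inv_into_into)
qed

lemma mpda_move_rename:
  "mpda_move A c c' \<Longrightarrow> mpda_move (mpda_rename A f h) (map_prod f (map h) c) (map_prod f (map h) c')"
proof -
  assume "mpda_move A c c'"
  then obtain \<gamma> \<gamma>' \<alpha> where t: "(fst c, \<gamma>, \<gamma>', fst c') \<in> trans A"
    and \<sigma>: "snd c = opt_list \<gamma> @ \<alpha>" "snd c' = opt_list \<gamma>' @ \<alpha>" "snd c \<noteq> []"
    unfolding mpda_move_def by blast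
  from t have tB:
    "(f (fst c), map_option h \<gamma>, map_option h \<gamma>', f (fst c')) \<in> trans (mpda_rename A f h)"
    unfolding mpda_rename_def by (auto intro: rev_image_eqI)
  show ?thesis unfolding mpda_move_def
    by (rule exI[of _ "map_option h \<gamma>"], rule exI[of _ "map_option h \<gamma>'"], rule exI[of _ "map h \<alpha>"])
      (use tB \<sigma> in \<open>auto simp: split_beta map_opt_list opt_list_def split: option.splits\<close>)
qed

lemma mpda_move_unrename:
  assumes "mpda_wf A" "inj_on f (states A)" "inj_on h (stack A)"
    and "mpda_move (mpda_rename A f h) c c'"
  shows "mpda_move A (map_prod (inv_into (states A) f) (map (inv_into (stack A) h)) c)
    (map_prod (inv_into (states A) f) (map (inv_into (stack A) h)) c')"
proof -
  let ?f' = "inv_into (states A) f" and ?h' = "inv_into (stack A) h"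
  from assms(4) obtain \<gamma>B \<gamma>B' \<alpha> where tB: "(fst c, \<gamma>B, \<gamma>B', fst c') \<in> trans (mpda_rename A f h)"
    and \<sigma>: "snd c = opt_list \<gamma>B @ \<alpha>" "snd c' = opt_list \<gamma>B' @ \<alpha>" "snd c \<noteq> []"
    unfolding mpda_move_def by blast
  from tB obtain q \<gamma> \<gamma>' q' where t: "(q, \<gamma>, \<gamma>', q') \<in> trans A"
    and q: "fst c = f q" "fst c' = f q'" and \<gamma>: "\<gamma>B = map_option h \<gamma>" "\<gamma>B' = map_option h \<gamma>'"
    unfolding mpda_rename_def by auto
  from assms(1) t have "q \<in> states A" "q' \<in> states A"
    "set_option \<gamma> \<subseteq> stack A" "set_option \<gamma>' \<subseteq> stack A"
    unfolding mpda_wf_def by fastforce+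
  then have inv: "?f' (f q) = q" "?f' (f q') = q'"
    "map ?h' (opt_list (map_option h \<gamma>)) = opt_list \<gamma>"
    "map ?h' (opt_list (map_option h \<gamma>')) = opt_list \<gamma>'"
    using assms(2,3) by (auto simp: opt_list_def split: option.splits)
  show ?thesis unfolding mpda_move_def
    by (rule exI[of _ \<gamma>], rule exI[of _ \<gamma>'], rule exI[of _ "map ?h' \<alpha>"]) (use inv t q \<gamma> \<sigma> in auto)
qed

lemma mpda_lang_rename:
  assumes "mpda_wf A" "inj_on f (states A)" "inj_on h (stack A)"
  shows "mpda_lang (mpda_rename A f h) = mpda_lang A"
proof (intro set_eqI iffI)
  let ?B = "mpda_rename A f h"
  fix z assume "z \<in> mpda_lang ?B"
  then obtain cs where run: "mpda_run ?B cs" and z: "z = map (out ?B \<circ> fst) cs"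
    unfolding mpda_lang_def by blast
  define G where "G = map_prod (inv_into (states A) f) (map (inv_into (stack A) h))"
  from run obtain q0 g0 qf where "cs \<noteq> []" "fst (hd cs) = f q0" "q0 \<in> initial A"
    "snd (hd cs) = [h g0]" "g0 \<in> stack A" "fst (last cs) = f qf" "qf \<in> final A" "snd (last cs) = []"
    and moves: "successively (mpda_move ?B) cs"
    unfolding mpda_run_iff by (auto simp: mpda_rename_def)
  moreover have "initial A \<subseteq> states A" "final A \<subseteq> states A"
    using assms(1) unfolding mpda_wf_def by auto
  moreover have "successively (mpda_move A) (map G cs)"
    unfolding successively_map G_def using moves
    by (rule successively_mono) (rule mpda_move_unrename[OF assms])
  ultimately have "mpda_run A (map G cs)"
    using assms(2,3) unfolding mpda_run_iff G_def by (auto simp: hd_map last_map)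
  moreover have "z = map (out A \<circ> fst) (map G cs)"
    unfolding z G_def by (simp add: mpda_rename_def)
  ultimately show "z \<in> mpda_lang A" unfolding mpda_lang_def by blast
next
  let ?B = "mpda_rename A f h"
  fix z assume "z \<in> mpda_lang A"
  then obtain cs where run: "mpda_run A cs" and z: "z = map (out A \<circ> fst) cs"
    unfolding mpda_lang_def by blast
  then have "\<forall>c \<in> set cs. fst c \<in> states A"
    using successively_mpda_move_states[OF assms(1)] assms(1)
    unfolding mpda_run_iff mpda_wf_def by blast
  then have "z = map (out ?B \<circ> fst) (map (map_prod f (map h)) cs)"
    using assms(2) unfolding z by (simp add: mpda_rename_def)
  moreover have "successively (mpda_move ?B) (map (map_prod f (map h)) cs)"
    using run unfolding mpda_run_iff successively_map
    by (auto elim: successively_mono intro: mpda_move_rename)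
  then have "mpda_run ?B (map (map_prod f (map h)) cs)"
    using run unfolding mpda_run_iff by (auto simp: hd_map last_map mpda_rename_def)
  ultimately show "z \<in> mpda_lang ?B" unfolding mpda_lang_def by blast
qed

lemma mpda_rename_to_nat:
  fixes A :: "('q, 'g, 'd) mpda"
  assumes "mpda_wf A" "pop_normalized A"
  shows "\<exists>B :: (nat, nat, 'd) mpda. mpda_wf B \<and> pop_normalized B \<and> mpda_lang B = mpda_lang A"
proof -
  from assms(1) have "finite (states A)" "finite (stack A)" unfolding mpda_wf_def by auto
  then obtain f :: "'q \<Rightarrow> nat" and h :: "'g \<Rightarrow> nat" where "inj_on f (states A)" "inj_on h (stack A)"
    using finite_imp_inj_to_nat_seg by metis
  with assms show ?thesis
    using mpda_wf_rename pop_normalized_rename mpda_lang_rename by blast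
qed

text \<open>A state \<open>(d, c, I)\<close> has just read \<open>c\<close> and outputs \<open>(d, c)\<close>: the lookahead \<open>d\<close> is the
  next letter (\<open>tri\<close> at the end of the word), and the item \<open>I\<close> must yield the rest of the word
  from \<open>d\<close> on, up to the items stored on the stack. Stack symbols are states too; popping resumes
  the popped state.\<close>

type_synonym 'a frame = "'a \<times> 'a \<times> 'a item option"

definition pending :: "'a frame \<times> 'a frame list \<Rightarrow> 'a item list" where
  "pending c = concat (map (opt_list \<circ> snd \<circ> snd) (fst c # snd c))"

lemma successively_map_eq_tl:
  "successively (\<lambda>x y. f x = g y) xs \<Longrightarrow> xs \<noteq> [] \<Longrightarrow> map f xs = tl (map g xs) @ [f (last xs)]"
  by (induction xs rule: induct_list012) auto

locale next_mpda =
  fixes P :: "'a cfg_prods" and S :: nat and \<Sigma> :: "'a set" and tri :: 'a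
  assumes finite_P: "finite P" and finite_\<Sigma>: "finite \<Sigma>"
begin

definition symbols :: "(nat + 'a) set" where
  "symbols = insert (Inl S) (Inr ` \<Sigma> \<union> rhs_symbols P \<union> Inl ` Domain P)"

definition items :: "'a item set" where
  "items = symbols \<times> symbols \<times> rhs_suffixes P"

definition frames :: "'a frame set" where
  "frames = {(d, c, I). c \<in> \<Sigma> \<and> (I = None \<and> d = tri \<or> d \<in> \<Sigma> \<and> I \<in> Some ` items)}"

inductive transition :: "'a frame \<Rightarrow> 'a frame option \<Rightarrow> 'a frame option \<Rightarrow> 'a frame \<Rightarrow> bool" where
  read: "(d, c, Some I) \<in> frames \<Longrightarrow> (d', d, Some J) \<in> frames \<Longrightarrow> read_step P I d [J]
    \<Longrightarrow> transition (d, c, Some I) None None (d', d, Some J)"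
| read_push: "(d, c, Some I) \<in> frames \<Longrightarrow> (d', d, Some J) \<in> frames \<Longrightarrow> (d'', c'', Some K) \<in> frames
    \<Longrightarrow> read_step P I d [J, K]
    \<Longrightarrow> transition (d, c, Some I) None (Some (d'', c'', Some K)) (d', d, Some J)"
| read_pop: "(d, c, Some I) \<in> frames \<Longrightarrow> (d', d, K) \<in> frames \<Longrightarrow> read_step P I d []
    \<Longrightarrow> transition (d, c, Some I) (Some (d', d, K)) None (d', d, K)"

definition aut :: "('a frame, 'a frame, 'a \<times> 'a) mpda" where
  "aut = \<lparr>states = frames, outputs = (\<lambda>q. (fst q, fst (snd q))) ` frames, stack = frames,
     trans = {(p, \<gamma>, \<gamma>', p'). transition p \<gamma> \<gamma>' p'}, out = \<lambda>q. (fst q, fst (snd q)),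
     initial = {(d, c, Some (Inl S, Inr c, [])) | d c. d \<in> \<Sigma> \<and> c \<in> \<Sigma>},
     final = {(tri, c, None) | c. c \<in> \<Sigma>}\<rparr>"

lemma aut_simps [simp]:
  "states aut = frames" "outputs aut = (\<lambda>q. (fst q, fst (snd q))) ` frames" "stack aut = frames"
  "trans aut = {(p, \<gamma>, \<gamma>', p'). transition p \<gamma> \<gamma>' p'}" "out aut = (\<lambda>q. (fst q, fst (snd q)))"
  "initial aut = {(d, c, Some (Inl S, Inr c, [])) | d c. d \<in> \<Sigma> \<and> c \<in> \<Sigma>}"
  "final aut = {(tri, c, None) | c. c \<in> \<Sigma>}"
  by (simp_all add: aut_def)

lemma finite_frames: "finite frames"
proof -
  have "finite items"
    unfolding items_def symbols_def
    by (simp add: finite_P finite_\<Sigma> finite_rhs_symbols finite_rhs_suffixes finite_Domain)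
  moreover have "frames \<subseteq> insert tri \<Sigma> \<times> \<Sigma> \<times> insert None (Some ` items)"
    unfolding frames_def by auto
  ultimately show ?thesis using finite_\<Sigma> by (auto intro: finite_subset)
qed

lemma initial_in_frames: "d \<in> \<Sigma> \<Longrightarrow> c \<in> \<Sigma> \<Longrightarrow> (d, c, Some (Inl S, Inr c, [])) \<in> frames"
  unfolding frames_def items_def symbols_def rhs_suffixes_def by auto

lemma aut_wf: "mpda_wf aut"
  unfolding mpda_wf_def
proof (intro conjI)
  show "finite (states aut)" "finite (outputs aut)" "finite (stack aut)"
    using finite_frames by simp_all
  show "\<forall>(q, \<gamma>, \<gamma>', q') \<in> trans aut. q \<in> states aut \<and> q' \<in> states aut \<and> set_option \<gamma> \<subseteq> stack aut
      \<and> set_option \<gamma>' \<subseteq> stack aut \<and> \<not> (\<gamma> \<noteq> None \<and> \<gamma>' \<noteq> None)"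
    by (auto elim: transition.cases)
  show "initial aut \<subseteq> states aut" "final aut \<subseteq> states aut"
    using initial_in_frames by (auto simp: frames_def)
qed simp

lemma aut_pop_normalized: "pop_normalized aut"
  unfolding pop_normalized_def
  by (rule exI[of _ id]) (auto elim: transition.cases)

lemma aut_move_cases [consumes 1, case_names read read_push read_pop]:
  assumes "mpda_move aut (p, \<sigma>) (p', \<sigma>')"
  obtains (read) d c I d' J where "p = (d, c, Some I)" "p' = (d', d, Some J)" "\<sigma>' = \<sigma>" "\<sigma> \<noteq> []"
      "read_step P I d [J]"
    | (read_push) d c I d' J s K where "p = (d, c, Some I)" "p' = (d', d, Some J)" "\<sigma>' = s # \<sigma>"
      "\<sigma> \<noteq> []" "snd (snd s) = Some K" "read_step P I d [J, K]"
    | (read_pop) d c I d' K where "p = (d, c, Some I)" "p' = (d', d, K)" "\<sigma> = p' # \<sigma>'"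
      "read_step P I d []"
  using aut_wf assms
proof (cases rule: mpda_move_cases)
  case internal
  from internal(1) have "transition p None None p'" by simp
  then show ?thesis by (cases rule: transition.cases) (use that(1) internal(2,3) in simp)
next
  case (push g)
  from push(1) have "transition p None (Some g) p'" by simp
  then show ?thesis by (cases rule: transition.cases) (use that(2) push(2,3) in simp)
next
  case (pop g)
  from pop(1) have "transition p (Some g) None p'" by simp
  then show ?thesis by (cases rule: transition.cases) (use that(3) pop(2) in simp)
qed

lemma aut_move_pending:
  assumes "mpda_move aut (p, \<sigma>) (p', \<sigma>')" and "items_yield P (pending (p', \<sigma>')) w"
  shows "items_yield P (pending (p, \<sigma>)) (fst (snd p') # w)"
  using assms(1)
proof (cases rule: aut_move_cases)
  case (read d a I d' J)
  then show ?thesis using read_step_items_yield[of P I d "[J]"] assms(2)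
    by (simp add: pending_def opt_list_def)
next
  case (read_push d a I d' J s K)
  then show ?thesis using read_step_items_yield[of P I d "[J, K]"] assms(2)
    by (simp add: pending_def opt_list_def)
next
  case (read_pop d a I d' K)
  then show ?thesis using read_step_items_yield[of P I d "[]"] assms(2)
    by (simp add: pending_def opt_list_def)
qed

lemma aut_move_lookahead: "mpda_move aut c c' \<Longrightarrow> fst (snd (fst c')) = fst (fst c)"
  by (cases c; cases c') (auto elim: aut_move_cases)

lemma aut_move_stack_bottom:
  "mpda_move aut (p, \<sigma>) (p', \<sigma>') \<Longrightarrow> \<sigma> \<noteq> [] \<and> (if \<sigma>' = [] then p' = last \<sigma> else last \<sigma>' = last \<sigma>)"
  by (auto elim: aut_move_cases)

lemma aut_moves_pending:
  "successively (mpda_move aut) cs \<Longrightarrow> cs \<noteq> [] \<Longrightarrow> pending (last cs) = []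
    \<Longrightarrow> items_yield P (pending (hd cs)) (map (\<lambda>c. fst (snd (fst c))) (tl cs))"
proof (induction cs)
  case (Cons c cs)
  show ?case
  proof (cases cs)
    case (Cons c' cs')
    with Cons.prems Cons.IH have "items_yield P (pending c') (map (\<lambda>c. fst (snd (fst c))) cs')"
      by simp
    moreover from Cons.prems \<open>cs = c' # cs'\<close> have "mpda_move aut c c'" by simp
    ultimately show ?thesis
      using aut_move_pending[of "fst c" "snd c" "fst c'" "snd c'"] \<open>cs = c' # cs'\<close>
      by simp
  qed (use Cons.prems in simp)
qed simp

lemma aut_moves_stack_bottom:
  "successively (mpda_move aut) cs \<Longrightarrow> cs \<noteq> [] \<Longrightarrow> snd (hd cs) \<noteq> [] \<Longrightarrow> snd (last cs) = []
    \<Longrightarrow> fst (last cs) = last (snd (hd cs))"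
proof (induction cs)
  case (Cons c cs)
  show ?case
  proof (cases cs)
    case (Cons c' cs')
    with Cons.prems have move: "mpda_move aut (fst c, snd c) (fst c', snd c')"
      and moves: "successively (mpda_move aut) cs" by auto
    show ?thesis
    proof (cases "snd c' = []")
      case True
      with moves \<open>cs = c' # cs'\<close> have "cs' = []"
        using mpda_move_stack_nonempty[of aut c'] by (cases cs') auto
      with True move \<open>cs = c' # cs'\<close> show ?thesis
        using aut_move_stack_bottom[OF move] by simp
    next
      case False
      with Cons.IH moves Cons.prems \<open>cs = c' # cs'\<close> have "fst (last cs) = last (snd c')" by simp
      with False move \<open>cs = c' # cs'\<close> show ?thesis
        using aut_move_stack_bottom[OF move] by simp
    qed
  qed (use Cons.prems in simp)
qed simp

lemma aut_moves_output:
  assumes "successively (mpda_move aut) cs" "cs \<noteq> []" "fst (fst (last cs)) = tri"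
  shows "map (out aut \<circ> fst) cs = next_word tri (map (\<lambda>c. fst (snd (fst c))) cs)"
proof -
  have "successively (\<lambda>c c'. fst (fst c) = fst (snd (fst c'))) cs"
    using assms(1) by (rule successively_mono) (simp add: aut_move_lookahead)
  then have "map (\<lambda>c. fst (fst c)) cs = tl (map (\<lambda>c. fst (snd (fst c))) cs) @ [tri]"
    using successively_map_eq_tl[of "\<lambda>c. fst (fst c)" "\<lambda>c. fst (snd (fst c))" cs] assms(2,3)
    by simp
  moreover have
    "map (out aut \<circ> fst) cs = zip (map (\<lambda>c. fst (fst c)) cs) (map (\<lambda>c. fst (snd (fst c))) cs)"
    by (induction cs) simp_all
  ultimately show ?thesis unfolding next_word_def by simp
qed

text \<open>A list of tasks \<open>(I, v)\<close>, each asking the item \<open>I\<close> to yield the nonempty word \<open>v\<close>, is laid out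
  as the current state followed by the stack, after the letter \<open>c\<close> has been read.\<close>

definition valid_tasks :: "('a item \<times> 'a list) list \<Rightarrow> bool" where
  "valid_tasks ts \<longleftrightarrow> (\<forall>(I, v) \<in> set ts. I \<in> items \<and> v \<noteq> [] \<and> set v \<subseteq> \<Sigma> \<and> item_yields P I v)"

fun task_frames :: "'a \<Rightarrow> ('a item \<times> 'a list) list \<Rightarrow> 'a frame list" where
  "task_frames c [] = [(tri, c, None)]"
| "task_frames c ((I, v) # ts) = (hd v, c, Some I) # task_frames (last v) ts"

definition task_conf :: "'a \<Rightarrow> ('a item \<times> 'a list) list \<Rightarrow> 'a frame \<times> 'a frame list" where
  "task_conf c ts = (hd (task_frames c ts), tl (task_frames c ts))"

lemma task_frames_hd: "\<exists>d I fs. task_frames c ts = (d, c, I) # fs"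
  by (cases "(c, ts)" rule: task_frames.cases) auto

lemma task_frames_in_frames: "c \<in> \<Sigma> \<Longrightarrow> valid_tasks ts \<Longrightarrow> set (task_frames c ts) \<subseteq> frames"
proof (induction c ts rule: task_frames.induct)
  case (1 c)
  then show ?case by (simp add: frames_def)
next
  case (2 c I v ts)
  then have "I \<in> items" "v \<noteq> []" "set v \<subseteq> \<Sigma>" "valid_tasks ts" by (auto simp: valid_tasks_def)
  then have "(hd v, c, Some I) \<in> frames" "last v \<in> \<Sigma>"
    using \<open>c \<in> \<Sigma>\<close> by (auto simp: frames_def)
  with 2 \<open>valid_tasks ts\<close> show ?case by simp
qed

lemma aut_move_task:
  assumes "c \<in> \<Sigma>" and ok: "valid_tasks ((I, a # concat (map snd qs)) # ts)" "valid_tasks qs"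
    and "length qs \<le> 2" and step: "read_step P I a (map fst qs)"
  shows "mpda_move aut (task_conf c ((I, a # concat (map snd qs)) # ts)) (task_conf a (qs @ ts))"
proof -
  have "a \<in> \<Sigma>" "valid_tasks (qs @ ts)" using ok by (auto simp: valid_tasks_def)
  then have target: "set (task_frames a (qs @ ts)) \<subseteq> frames"
    by (rule task_frames_in_frames)
  have source: "(a, c, Some I) \<in> frames"
    using task_frames_in_frames[OF assms(1) ok(1)] by simp
  from \<open>length qs \<le> 2\<close> consider "qs = []" | J x1 where "qs = [(J, x1)]"
    | J x1 K x2 where "qs = [(J, x1), (K, x2)]"
    by (cases qs rule: remdups_adj.cases) (auto simp: numeral_2_eq_2)
  then show ?thesis
  proof cases
    case 1
    obtain d' K fs where hd: "task_frames a ts = (d', a, K) # fs"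
      using task_frames_hd by blast
    with target 1 have "(d', a, K) \<in> frames" by auto
    with source step 1 have "transition (a, c, Some I) (Some (d', a, K)) None (d', a, K)"
      by (simp add: transition.read_pop)
    then have "mpda_move aut ((a, c, Some I), (d', a, K) # fs) ((d', a, K), fs)"
      by (intro mpda_move_pop) simp
    with 1 hd show ?thesis unfolding task_conf_def by simp
  next
    case 2
    with ok(2) have "x1 \<noteq> []" by (simp add: valid_tasks_def)
    with target source step 2 have "transition (a, c, Some I) None None (hd x1, a, Some J)"
      by (auto intro: transition.read)
    moreover have "task_frames (last x1) ts \<noteq> []" by (cases ts) auto
    ultimately show ?thesis using 2 \<open>x1 \<noteq> []\<close> unfolding task_conf_def
      by (auto intro: mpda_move_internal)
  next
    case 3
    with ok(2) have "x1 \<noteq> []" "x2 \<noteq> []" by (auto simp: valid_tasks_def)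
    with target source step 3
    have "transition (a, c, Some I) None (Some (hd x2, last x1, Some K)) (hd x1, a, Some J)"
      by (auto intro: transition.read_push)
    moreover have "task_frames (last x2) ts \<noteq> []" by (cases ts) auto
    ultimately show ?thesis using 3 \<open>x1 \<noteq> []\<close> \<open>x2 \<noteq> []\<close> unfolding task_conf_def
      by (auto intro: mpda_move_push)
  qed
qed

lemma valid_tasks_Cons_split:
  assumes "valid_tasks ((I, a # x) # ts)"
  obtains qs where "valid_tasks qs" "length qs \<le> 2" "concat (map snd qs) = x"
    "read_step P I a (map fst qs)"
proof -
  obtain Z E \<beta> where I: "I = (Z, E, \<beta>)" by (cases I) auto
  from assms I have "Z \<in> symbols" "E \<in> symbols" "\<beta> \<in> rhs_suffixes P" "a \<in> \<Sigma>" "set x \<subseteq> \<Sigma>"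
    and yields: "item_yields P (Z, E, \<beta>) (a # x)"
    by (auto simp: valid_tasks_def items_def)
  from yields \<open>\<beta> \<in> rhs_suffixes P\<close> obtain Y F \<gamma> x1 x2 where split: "x = x1 @ x2"
    "item_yields P (Y, Inr a, []) x1" "item_yields P (Z, F, \<gamma>) x2"
    "read_step P (Z, E, \<beta>) a [(Y, Inr a, []), (Z, F, \<gamma>)]"
    "Y \<in> rhs_symbols P" "F = E \<or> F \<in> Inl ` Domain P" "\<gamma> \<in> rhs_suffixes P"
    by (rule item_yields_Cons_split)
  define ps where "ps = [((Y, Inr a, []), x1), ((Z, F, \<gamma>), x2)]"
  have "Y \<in> symbols" "Inr a \<in> symbols" "F \<in> symbols"
    using split(5,6) \<open>a \<in> \<Sigma>\<close> \<open>E \<in> symbols\<close> unfolding symbols_def by blast+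
  then have "(Y, Inr a, []) \<in> items" "(Z, F, \<gamma>) \<in> items"
    using \<open>Z \<in> symbols\<close> split(7) by (simp_all add: items_def rhs_suffixes_def)
  then have ps_ok: "\<forall>(J, v) \<in> set ps. J \<in> items \<and> set v \<subseteq> \<Sigma> \<and> item_yields P J v"
    using split(1-3) \<open>set x \<subseteq> \<Sigma>\<close> unfolding ps_def by simp
  show ?thesis
  proof (rule that[of "filter (\<lambda>(J, v). v \<noteq> []) ps"])
    show "valid_tasks (filter (\<lambda>(J, v). v \<noteq> []) ps)"
      using ps_ok unfolding valid_tasks_def by auto
    show "length (filter (\<lambda>(J, v). v \<noteq> []) ps) \<le> 2"
      using length_filter_le[of _ ps] by (simp add: ps_def)
    show "concat (map snd (filter (\<lambda>(J, v). v \<noteq> []) ps)) = x"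
      using split(1) by (simp add: ps_def)
    show "read_step P I a (map fst (filter (\<lambda>(J, v). v \<noteq> []) ps))"
      using read_step_filter_nonempty[of P I a ps] split(4) ps_ok I by (simp add: ps_def)
  qed
qed

lemma aut_run_from_tasks:
  assumes "c \<in> \<Sigma>" "valid_tasks ts"
  shows "\<exists>cs. successively (mpda_move aut) cs \<and> cs \<noteq> [] \<and> hd cs = task_conf c ts
    \<and> last cs = ((tri, last (c # concat (map snd ts)), None), [])
    \<and> map (\<lambda>c. fst (snd (fst c))) cs = c # concat (map snd ts)"
  using assms
proof (induction "length (concat (map snd ts))" arbitrary: c ts rule: less_induct)
  case less
  show ?case
  proof (cases ts)
    case Nil
    then show ?thesis
      by (intro exI[of _ "[task_conf c []]"]) (simp add: task_conf_def)
  next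
    case (Cons t ts')
    with less.prems obtain I a x where ts: "ts = (I, a # x) # ts'" "a \<in> \<Sigma>"
      by (cases t; cases "snd t") (auto simp: valid_tasks_def)
    with less.prems obtain qs where qs: "valid_tasks qs" "length qs \<le> 2" "concat (map snd qs) = x"
      "read_step P I a (map fst qs)"
      using valid_tasks_Cons_split by metis
    have ok: "valid_tasks (qs @ ts')" using qs(1) less.prems(2) ts by (auto simp: valid_tasks_def)
    have shorter: "length (concat (map snd (qs @ ts'))) < length (concat (map snd ts))"
      using ts qs(3) by simp
    obtain cs where cs: "successively (mpda_move aut) cs" "cs \<noteq> []"
      "hd cs = task_conf a (qs @ ts')"
      "last cs = ((tri, last (a # concat (map snd (qs @ ts'))), None), [])"
      "map (\<lambda>c. fst (snd (fst c))) cs = a # concat (map snd (qs @ ts'))"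
      using less.hyps[OF shorter \<open>a \<in> \<Sigma>\<close> ok] by (elim exE conjE) (rule that)
    have "mpda_move aut (task_conf c ts) (hd cs)"
      using aut_move_task[OF less.prems(1) _ qs(1,2,4), of ts'] less.prems(2) ts qs(3) cs(3) by simp
    with cs ts qs(3) show ?thesis
      by (intro exI[of _ "task_conf c ts # cs"])
        (auto simp: successively_Cons task_conf_def)
  qed
qed

lemma aut_lang_sound:
  assumes "z \<in> mpda_lang aut"
  shows "\<exists>w. z = next_word tri w \<and> generates P [Inl S] w \<and> w \<in> lists \<Sigma> \<and> w \<noteq> []"
proof -
  from assms obtain cs where run: "mpda_run aut cs" and z: "z = map (out aut \<circ> fst) cs"
    unfolding mpda_lang_def by blast
  from run obtain d c1 g c where "cs \<noteq> []"
    and hd: "hd cs = ((d, c1, Some (Inl S, Inr c1, [])), [g])"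
    and "g \<in> frames" and last: "last cs = ((tri, c, None), [])"
    and moves: "successively (mpda_move aut) cs"
    unfolding mpda_run_iff by (cases "hd cs"; cases "last cs") auto
  define w where "w = map (\<lambda>c. fst (snd (fst c))) cs"
  have w: "w = c1 # map (\<lambda>c. fst (snd (fst c))) (tl cs)"
    using \<open>cs \<noteq> []\<close> hd unfolding w_def by (cases cs) auto
  have "g = (tri, c, None)"
    using aut_moves_stack_bottom[OF moves \<open>cs \<noteq> []\<close>] hd last by simp
  then have "items_yield P [(Inl S, Inr c1, [])] (map (\<lambda>c. fst (snd (fst c))) (tl cs))"
    using aut_moves_pending[OF moves \<open>cs \<noteq> []\<close>] hd last by (simp add: pending_def opt_list_def)
  then have "left_corner P (Inl S) (Inr c1) (map (\<lambda>c. fst (snd (fst c))) (tl cs))"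
    by auto
  then have "generates P [Inl S] w"
    using left_corner_generates[of P "Inl S" "Inr c1" _ "[c1]"] w by simp
  moreover have "\<forall>c \<in> set cs. fst c \<in> frames"
    using successively_mpda_move_states[OF aut_wf moves] hd initial_in_frames run
    unfolding mpda_run_iff by auto
  then have "w \<in> lists \<Sigma>" unfolding w_def by (fastforce simp: frames_def)
  moreover have "z = next_word tri w"
    using aut_moves_output[OF moves \<open>cs \<noteq> []\<close>] last z unfolding w_def by simp
  ultimately show ?thesis using w by blast
qed

lemma aut_lang_complete:
  assumes "generates P [Inl S] w" "w \<in> lists \<Sigma>" "2 \<le> length w"
  shows "next_word tri w \<in> mpda_lang aut"
proof -
  from assms(2,3) obtain c1 c2 r where w: "w = c1 # c2 # r" "c1 \<in> \<Sigma>" "c2 \<in> \<Sigma>" "set r \<subseteq> \<Sigma>"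
    by (cases w rule: remdups_adj.cases) auto
  define I where "I = ((Inl S, Inr c1, []) :: 'a item)"
  have "left_corner P (Inl S) (Inr c1) (c2 # r)"
    using assms(1) w(1) by (simp add: left_corner_of_generates)
  then have "valid_tasks [(I, c2 # r)]"
    using initial_in_frames[OF w(3,2)] w unfolding valid_tasks_def I_def frames_def
    by (auto intro: item_yieldsI[of P "[]" "[]", simplified])
  from aut_run_from_tasks[OF w(2) this] obtain cs where moves: "successively (mpda_move aut) cs"
    and "cs \<noteq> []" and hd: "hd cs = task_conf c1 [(I, c2 # r)]"
    and "last cs = ((tri, last (c1 # concat (map snd [(I, c2 # r)])), None), [])"
    and "map (\<lambda>c. fst (snd (fst c))) cs = c1 # concat (map snd [(I, c2 # r)])"
    by (elim exE conjE) (rule that)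
  with w(1) have last: "last cs = ((tri, last w, None), [])"
    and letters: "map (\<lambda>c. fst (snd (fst c))) cs = w"
    by simp_all
  have "last (c2 # r) \<in> \<Sigma>" using w by (cases r) auto
  then have "mpda_run aut cs"
    using moves \<open>cs \<noteq> []\<close> hd last w unfolding mpda_run_iff task_conf_def I_def
    by (auto simp: frames_def)
  moreover have "next_word tri w = map (out aut \<circ> fst) cs"
    using aut_moves_output[OF moves \<open>cs \<noteq> []\<close>] last letters by simp
  ultimately show ?thesis unfolding mpda_lang_def by blast
qed

lemma aut_lang:
  assumes "\<forall>w \<in> cfg_lang P S. 2 \<le> length w"
  shows "mpda_lang aut = Next \<Sigma> tri (cfg_lang P S)"
  using aut_lang_sound aut_lang_complete assms
  unfolding Next_def cfg_lang_eq_generates by fastforce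

end

theorem corollary3p5:
  fixes \<Sigma> :: "'a set" and tri :: 'a and L :: "'a list set"
  assumes "finite \<Sigma>"
    and "tri \<notin> \<Sigma>"
    and "L \<subseteq> lists \<Sigma>"
    and "context_free \<Sigma> L"
    and "\<forall>w \<in> L. 2 \<le> length w"
  shows "\<exists>A :: (nat, nat, 'a \<times> 'a) mpda. mpda_wf A \<and> pop_normalized A
           \<and> mpda_lang A = Next \<Sigma> tri L"
proof -
  from assms(4) obtain P S where "finite P" and L: "L = cfg_lang P S"
    unfolding context_free_def by blast
  interpret next_mpda P S \<Sigma> tri
    using \<open>finite P\<close> assms(1) by unfold_locales
  have "mpda_lang aut = Next \<Sigma> tri L"
    using aut_lang assms(5) L by simp
  with mpda_rename_to_nat[OF aut_wf aut_pop_normalized] show ?thesis by metis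
qed

end
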